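(* Let $G$ be a finite non-cyclic group. (i) If $\psi'(G)\ge \frac{19}{43}$, then $2$ divides $|G|$. (ii) If $\psi'(G)>\frac{31}{77}$, then $2$ or $3$ divides $|G|$.
   Context: For a finite group $G$, $\psi(G)=\sum_{x\in G} o(x)$ and $\psi'(G)=\psi(G)/\psi(\mathcal{C}_{|G|})$, where $\mathcal{C}_n$ is the cyclic group of order $n$. *)

theory Defs
  imports "HOL-Algebra.Multiplicative_Group" "HOL-Algebra.Elementary_Groups"
begin

definition psi :: "('a, 'b) monoid_scheme \<Rightarrow> nat" where
  "psi G = (\<Sum>x\<in>carrier G. group.ord G x)"

text \<open>psi' G = psi G / psi (C_|G|), with C_n realised as integer_mod_group n.\<close>
definition psi' :: "('a, 'b) monoid_scheme \<Rightarrow> real" where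
  "psi' G = real (psi G) / real (psi (integer_mod_group (order G)))"

end

theory Submission
  imports Defs "HOL-Computational_Algebra.Primes"
begin

(* Let all prime divisors of n = |G| be at least q >= 3, let p be the largest one and write
   n = p^a m with p not dividing m. By induction on n, psi(G) <= psi(C_n), and
   psi(G) <= c psi(C_n) when G is not cyclic, where c = 11/25 for q = 3 and c = 2/5 for q >= 5.

   If p = 3, G is a non-cyclic 3-group, whose elements have order at most 3^(a-1); this gives
   the constant 11/25. Otherwise p >= 5. An element of index less than p generates a subgroup
   that contains every element of order p^a, so its cyclic subgroup of order p^a is normal.
   Hence, if there is no normal cyclic subgroup of order p^a, every element has order at most
   n/p and psi(G) <= n^2/p, while multiplicativity of psi(C_n) gives psi(C_n) >= q n^2/(p + 1).
   If there is one, P = <y>, then either y is central and psi(G) = psi(C_(p^a)) psi(G/P) with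
   G/P not cyclic, or the centralizer of y is a proper subgroup, to which the induction
   applies, and every element outside it has order at most p^(a-1) times its order modulo P.
   Since 11/25 < 19/43 and 2/5 < 31/77, the theorem follows. *)

section \<open>The sum of element orders of a cyclic group\<close>

text \<open>\<open>psi_C n\<close> is \<open>\<psi>(C\<^sub>n)\<close>: the element \<open>x [^] i\<close> of a cyclic group of order \<open>n\<close>
  generated by \<open>x\<close> has order \<open>n div gcd n i\<close>.\<close>
definition psi_C :: "nat \<Rightarrow> nat" where
  "psi_C n = (\<Sum>i<n. n div gcd n i)"

lemma psi_C_Suc_0 [simp]: "psi_C (Suc 0) = 1"
  by (simp add: psi_C_def)

lemma psi_C_pos: "n > 0 \<Longrightarrow> psi_C n > 0"
proof -
  assume "n > 0"
  then have "n div gcd n 0 \<le> psi_C n"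
    unfolding psi_C_def by (intro member_le_sum) auto
  with \<open>n > 0\<close> show ?thesis
    by simp
qed

lemma psi_C_le_square: "psi_C n \<le> n\<^sup>2"
proof -
  have "psi_C n \<le> (\<Sum>i<n. n)"
    unfolding psi_C_def by (intro sum_mono) auto
  then show ?thesis
    by (simp add: power2_eq_square)
qed

lemma bij_betw_mod_mod:
  fixes a b :: nat
  assumes "coprime a b"
  shows "bij_betw (\<lambda>i. (i mod a, i mod b)) {..<a * b} ({..<a} \<times> {..<b})"
proof -
  have eq: "i = j" if "j \<le> i" "i < a * b" "i mod a = j mod a" "i mod b = j mod b" for i j :: nat
  proof -
    have "a * b dvd i - j"
      using that assms by (simp add: mod_eq_dvd_iff_nat divides_mult)
    moreover have "i - j < a * b"
      using that by linarith
    ultimately have "i - j = 0"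
      by (metis nat_dvd_not_less neq0_conv)
    then show ?thesis
      using that(1) by simp
  qed
  have inj: "inj_on (\<lambda>i. (i mod a, i mod b)) {..<a * b}"
  proof (rule inj_onI)
    fix i j assume "i \<in> {..<a * b}" "j \<in> {..<a * b}" "(i mod a, i mod b) = (j mod a, j mod b)"
    then show "i = j"
      using eq[of j i] eq[of i j] by (cases "j \<le> i") auto
  qed
  moreover have "(\<lambda>i. (i mod a, i mod b)) ` {..<a * b} = {..<a} \<times> {..<b}"
  proof (rule card_subset_eq)
    show "(\<lambda>i. (i mod a, i mod b)) ` {..<a * b} \<subseteq> {..<a} \<times> {..<b}"
      by (auto simp: mult_less_cancel2 intro!: mod_less_divisor gr0I)
    show "card ((\<lambda>i. (i mod a, i mod b)) ` {..<a * b}) = card ({..<a} \<times> {..<b})"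
      using card_image[OF inj] by (simp add: card_cartesian_product)
  qed simp
  ultimately show ?thesis
    by (simp add: bij_betw_def)
qed

lemma gcd_mult_coprime:
  fixes a b i :: nat
  assumes "coprime a b"
  shows "gcd (a * b) i = gcd a i * gcd b i"
proof (rule dvd_antisym)
  have "coprime (gcd a i) (gcd b i)"
    by (rule coprime_divisors[OF _ _ assms]) auto
  then show "gcd a i * gcd b i dvd gcd (a * b) i"
    by (intro gcd_greatest divides_mult mult_dvd_mono) auto
  have "gcd (a * b) i dvd gcd (a * b) (a * i)"
    by (intro gcd_greatest gcd_dvd1 dvd_mult gcd_dvd2)
  moreover have "gcd (a * b) i dvd gcd (i * b) (i * i)"
    by (intro gcd_greatest dvd_mult2 dvd_mult gcd_dvd2)
  ultimately have "gcd (a * b) i dvd gcd (a * gcd b i) (i * gcd b i)"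
    by (simp add: gcd_mult_distrib_nat)
  also have "\<dots> = gcd a i * gcd b i"
    using gcd_mult_distrib_nat[of "gcd b i" a i] by (simp add: mult.commute)
  finally show "gcd (a * b) i dvd gcd a i * gcd b i" .
qed

lemma dvd_mult_iff_div_gcd_dvd:
  fixes n j k :: nat
  assumes "n > 0"
  shows "n dvd k * j \<longleftrightarrow> n div gcd n j dvd k"
proof -
  define g where "g = gcd n j"
  have "g > 0"
    using assms by (simp add: g_def)
  then obtain n' j' where nj: "n = n' * g" "j = j' * g" and "coprime n' j'"
    using gcd_coprime_exists[of n j] unfolding g_def by blast
  then have "n dvd k * j \<longleftrightarrow> n' dvd k"
    using \<open>g > 0\<close> by (simp add: coprime_dvd_mult_left_iff)
  moreover have "n div g = n'"
    using nj(1) \<open>g > 0\<close> by simp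
  ultimately show ?thesis
    by (simp add: g_def)
qed

lemma psi_C_mult:
  assumes "coprime a b"
  shows "psi_C (a * b) = psi_C a * psi_C b"
proof -
  define g where "g = (\<lambda>(u, v). (a div gcd a u) * (b div gcd b v))"
  have summand: "(a * b) div gcd (a * b) i = g (i mod a, i mod b)" for i
  proof -
    have "gcd a i = gcd a (i mod a)" "gcd b i = gcd b (i mod b)"
      by (metis gcd.commute gcd_red_nat)+
    then show ?thesis
      using gcd_mult_coprime[OF assms] by (simp add: g_def div_mult_div_if_dvd)
  qed
  have "psi_C (a * b) = (\<Sum>i<a * b. g (i mod a, i mod b))"
    unfolding psi_C_def by (simp add: summand)
  also have "\<dots> = (\<Sum>z\<in>{..<a} \<times> {..<b}. g z)"
    using sum.reindex_bij_betw[OF bij_betw_mod_mod[OF assms], of g] by simp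
  also have "\<dots> = psi_C a * psi_C b"
    by (simp add: sum.cartesian_product[symmetric] g_def psi_C_def sum_product)
  finally show ?thesis .
qed

lemma psi_C_prime_power_Suc:
  assumes p: "prime p"
  shows "psi_C (p ^ Suc b) = psi_C (p ^ b) + (p ^ Suc b - p ^ b) * p ^ Suc b"
proof -
  define N M where "N = p ^ b" and "M = p ^ Suc b"
  define A where "A = (\<lambda>j. p * j) ` {..<N}"
  have p0: "p > 0"
    using p prime_gt_0_nat by blast
  have inj: "inj_on (\<lambda>j. p * j) {..<N}"
    using p0 by (auto simp: inj_on_def)
  have A: "A \<subseteq> {..<M}"
    using p0 by (auto simp: A_def M_def N_def)
  have "(\<Sum>i\<in>A. M div gcd M i) = (\<Sum>j<N. M div gcd M (p * j))"
    unfolding A_def by (simp add: sum.reindex[OF inj])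
  also have "\<dots> = psi_C N"
    unfolding psi_C_def
  proof (rule sum.cong[OF refl])
    fix j
    have "gcd M (p * j) = p * gcd N j"
      by (simp add: M_def N_def gcd_mult_distrib_nat)
    then show "M div gcd M (p * j) = N div gcd N j"
      using p0 by (simp add: M_def N_def)
  qed
  finally have sum_A: "(\<Sum>i\<in>A. M div gcd M i) = psi_C N" .
  have "M div gcd M i = M" if "i \<in> {..<M} - A" for i
  proof -
    have "\<not> p dvd i"
    proof
      assume "p dvd i"
      then obtain j where "i = p * j" ..
      with that p0 show False
        by (auto simp: A_def M_def N_def)
    qed
    then have "coprime M i"
      using p by (simp add: M_def prime_imp_coprime coprime_power_left_iff)
    then show ?thesis
      by simp
  qed
  then have "(\<Sum>i\<in>{..<M} - A. M div gcd M i) = card ({..<M} - A) * M"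
    by simp
  also have "card ({..<M} - A) = M - N"
    using card_Diff_subset[OF _ A] card_image[OF inj] by (simp add: A_def)
  finally have sum_rest: "(\<Sum>i\<in>{..<M} - A. M div gcd M i) = (M - N) * M" .
  have "psi_C M = (\<Sum>i\<in>A. M div gcd M i) + (\<Sum>i\<in>{..<M} - A. M div gcd M i)"
    unfolding psi_C_def using sum.subset_diff[OF A] by (simp add: add.commute)
  then show ?thesis
    using sum_A sum_rest by (simp add: M_def N_def)
qed

lemma psi_C_prime_power:
  assumes p: "prime p"
  shows "(p + 1) * psi_C (p ^ b) = p ^ (2 * b + 1) + 1"
proof (induction b)
  case 0
  then show ?case by simp
next
  case (Suc b)
  obtain s where s: "p = Suc s"
    using p by (metis not0_implies_Suc not_prime_0)
  define X where "X = p ^ b * p ^ b"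
  have "p ^ Suc b - p ^ b = s * p ^ b"
    using s by (simp add: diff_mult_distrib)
  then have "psi_C (p ^ Suc b) = psi_C (p ^ b) + s * p * X"
    unfolding psi_C_prime_power_Suc[OF p] X_def by (simp add: algebra_simps)
  moreover have "(p + 1) * psi_C (p ^ b) = p * X + 1"
    using Suc.IH by (simp add: X_def mult_2 power_add)
  moreover have "p ^ (2 * Suc b + 1) = p * X * p * p"
    by (simp add: X_def mult_2 power_add)
  moreover have "p * p = 1 + (p + 1) * s"
    using s by simp
  ultimately show ?case
    by (simp add: algebra_simps)
qed

lemma psi_C_prime_power_Suc_ge:
  assumes r: "prime r"
  shows "(r * r - r + 1) * psi_C (r ^ b) \<le> psi_C (r ^ Suc b)"
proof -
  have "(r * r - r) * psi_C (r ^ b) = (r - 1) * r * psi_C (r ^ b)"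
    by (simp add: algebra_simps diff_mult_distrib)
  also have "\<dots> \<le> (r - 1) * r * (r ^ b * r ^ b)"
    using psi_C_le_square[of "r ^ b"] by (simp add: power2_eq_square)
  also have "\<dots> = (r ^ Suc b - r ^ b) * r ^ Suc b"
    by (simp add: algebra_simps diff_mult_distrib)
  finally have "(r * r - r) * psi_C (r ^ b) \<le> (r ^ Suc b - r ^ b) * r ^ Suc b" .
  moreover have "(r * r - r + 1) * psi_C (r ^ b) = (r * r - r) * psi_C (r ^ b) + psi_C (r ^ b)"
    by (simp add: algebra_simps)
  ultimately show ?thesis
    unfolding psi_C_prime_power_Suc[OF r] by linarith
qed

lemma multiplicity_decompose_coprime:
  fixes n p :: nat
  assumes "prime p" "n > 0"
  obtains u where "n = p ^ multiplicity p n * u" "\<not> p dvd u" "u > 0" "\<And>k. coprime (p ^ k) u"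
proof -
  from \<open>n > 0\<close> have "n \<noteq> 0"
    by simp
  then obtain u where u: "n = p ^ multiplicity p n * u" "\<not> p dvd u"
    using multiplicity_decompose'[of n p] assms(1) not_prime_unit by blast
  moreover have "coprime (p ^ k) u" for k
    using u(2) assms(1) by (simp add: coprime_power_left_iff prime_imp_coprime)
  ultimately show ?thesis
    using that assms(2) by (metis gr0I mult_0_right)
qed

lemma psi_C_mult_prime_ge:
  assumes r: "prime r" and d: "d > 0"
  shows "(r * r - r + 1) * psi_C d \<le> psi_C (d * r)"
proof -
  define b where "b = multiplicity r d"
  obtain u where u: "d = r ^ b * u" and cop: "\<And>k. coprime (r ^ k) u"
    using multiplicity_decompose_coprime[OF r d] unfolding b_def by blast
  have "(r * r - r + 1) * psi_C d = (r * r - r + 1) * psi_C (r ^ b) * psi_C u"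
    unfolding u psi_C_mult[OF cop] by (simp add: algebra_simps)
  also have "\<dots> \<le> psi_C (r ^ Suc b) * psi_C u"
    using psi_C_prime_power_Suc_ge[OF r] by (rule mult_right_mono) simp
  also have "\<dots> = psi_C (d * r)"
    unfolding u psi_C_mult[OF cop, symmetric] by (simp add: algebra_simps)
  finally show ?thesis .
qed

lemma psi_C_mono_dvd:
  assumes "d dvd e" "e > 0"
  shows "psi_C d \<le> psi_C e"
proof -
  obtain t where "e = d * t"
    using assms(1) ..
  moreover have "psi_C d \<le> psi_C (d * t)" if "d * t > 0" for d
    using that
  proof (induction t arbitrary: d rule: less_induct)
    case (less t)
    show ?case
    proof (cases "t = 1")
      case False
      then obtain r t' where r: "prime r" "t = r * t'"
        using prime_factor_nat by (metis dvdE)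
      with less.prems have pos: "t' > 0" "d > 0" "t' < t"
        using prime_gt_1_nat[OF r(1)] by auto
      have "psi_C d \<le> psi_C (d * t')"
        using less.IH pos by simp
      also have "\<dots> \<le> (r * r - r + 1) * psi_C (d * t')"
        by simp
      also have "\<dots> \<le> psi_C (d * t)"
        using psi_C_mult_prime_ge[OF r(1), of "d * t'"] pos r(2) by (simp add: ac_simps)
      finally show ?thesis .
    qed simp
  qed
  ultimately show ?thesis
    using assms(2) by blast
qed

lemma obtain_largest_prime_factor:
  fixes n :: nat
  assumes "n > 1"
  obtains p a m where "prime p" "p \<in> prime_factors n" "\<forall>r\<in>prime_factors n. r \<le> p"
    "n = p ^ a * m" "\<not> p dvd m" "a > 0"
proof -
  define p where "p = Max (prime_factors n)"
  have "prime_factors n \<noteq> {}"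
    using assms by (simp add: prime_factorization_empty_iff)
  then have p: "p \<in> prime_factors n" "\<forall>r\<in>prime_factors n. r \<le> p"
    unfolding p_def by simp_all
  then have "prime p" "multiplicity p n > 0"
    by (auto simp: prime_factors_multiplicity)
  moreover obtain m where "n = p ^ multiplicity p n * m" "\<not> p dvd m"
    using multiplicity_decompose_coprime[OF \<open>prime p\<close>] assms by (metis gr_implies_not0 less_one neq0_conv)
  ultimately show ?thesis
    using p that by blast
qed

text \<open>The factor \<open>q / (P + 1)\<close> comes from telescoping \<open>\<Prod> r / (r + 1)\<close> over the prime
  divisors \<open>r\<close> of \<open>n\<close>, using \<open>(r + 1) * psi_C (r ^ b) > r ^ (2 * b + 1)\<close>.\<close>
lemma psi_C_lower_bound:
  assumes "n > 0" "\<forall>r\<in>prime_factors n. q \<le> r \<and> r \<le> P" "q \<le> P + 1"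
  shows "q * n\<^sup>2 \<le> (P + 1) * psi_C n"
  using assms
proof (induction n arbitrary: P rule: less_induct)
  case (less n)
  show ?case
  proof (cases "n = 1")
    case True
    then show ?thesis
      using less.prems(3) by simp
  next
    case False
    then obtain r b u where r: "prime r" "r \<in> prime_factors n" "\<forall>s\<in>prime_factors n. s \<le> r"
      and u: "n = r ^ b * u" "\<not> r dvd u" "b > 0"
      using obtain_largest_prime_factor less.prems(1) by (metis less_one nat_neq_iff)
    have "u > 0" "coprime (r ^ b) u"
      using u(1,2) less.prems(1) r(1) prime_imp_coprime[of r u]
      by (auto simp: coprime_power_left_iff intro: gr0I)
    have "r ^ b > 1"
      using u(3) prime_gt_1_nat[OF r(1)] by (metis one_less_power)
    then have "u < n"
      using u(1) \<open>u > 0\<close> by simp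
    moreover have "\<forall>s\<in>prime_factors u. q \<le> s \<and> s \<le> r - 1"
    proof
      fix s assume s: "s \<in> prime_factors u"
      then have "s \<in> prime_factors n" "s \<noteq> r"
        using u less.prems(1) by (auto simp: in_prime_factors_iff)
      then show "q \<le> s \<and> s \<le> r - 1"
        using less.prems(2) r(3) by fastforce
    qed
    moreover have "q \<le> r - 1 + 1"
      using less.prems(2) r(2) by auto
    ultimately have IH: "q * u\<^sup>2 \<le> r * psi_C u"
      using less.IH[OF _ \<open>u > 0\<close>] prime_gt_0_nat[OF r(1)] by fastforce
    have "r * (r ^ b)\<^sup>2 \<le> (r + 1) * psi_C (r ^ b)"
      unfolding psi_C_prime_power[OF r(1)] by (simp add: power_mult[symmetric] power_add mult.commute)
    then have "(r * (r ^ b)\<^sup>2) * (q * u\<^sup>2) \<le> ((r + 1) * psi_C (r ^ b)) * (r * psi_C u)"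
      using IH by (rule mult_mono) simp_all
    then have "r * (q * n\<^sup>2) \<le> r * ((r + 1) * psi_C n)"
      unfolding u(1) psi_C_mult[OF \<open>coprime (r ^ b) u\<close>] by (simp add: power_mult_distrib algebra_simps)
    then have "q * n\<^sup>2 \<le> (r + 1) * psi_C n"
      using prime_gt_0_nat[OF r(1)] by simp
    also have "\<dots> \<le> (P + 1) * psi_C n"
      using less.prems(2) r(2) by simp
    finally show ?thesis .
  qed
qed

lemma dvd_prime_power_le:
  fixes p d :: nat
  assumes "prime p" "d dvd p ^ a" "d \<noteq> p ^ a"
  shows "d * p \<le> p ^ a"
proof -
  obtain i where i: "i \<le> a" "d = p ^ i"
    using assms(1,2) by (auto simp: divides_primepow_nat)
  with assms(3) have "Suc i \<le> a"
    by (cases "i = a") auto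
  then show ?thesis
    using power_increasing[of "Suc i" a p] prime_ge_1_nat[OF assms(1)] i(2) by (simp add: mult.commute)
qed

lemma dvd_prime_power_Suc_neq:
  fixes p d :: nat
  assumes "prime p" "d dvd p ^ Suc b" "d \<noteq> p ^ Suc b"
  shows "d dvd p ^ b"
proof -
  obtain i where "i \<le> Suc b" "d = p ^ i"
    using divides_primepow_nat[OF assms(1)] assms(2) by blast
  moreover from this assms(3) have "i \<noteq> Suc b"
    by blast
  ultimately show ?thesis
    by (simp add: le_Suc_eq le_imp_power_dvd)
qed

lemma prime_factors_ge_dvd:
  fixes n d :: nat
  assumes "n > 0" "\<forall>r\<in>prime_factors n. q \<le> r" "d dvd n"
  shows "\<forall>r\<in>prime_factors d. q \<le> r"
  using assms dvd_prime_factors[OF _ assms(3)] by fastforce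

lemma prime_factors_ge_3_of_odd:
  fixes n :: nat
  assumes "odd n"
  shows "\<forall>r\<in>prime_factors n. 3 \<le> r"
proof
  fix r assume "r \<in> prime_factors n"
  then have "prime r" "r dvd n"
    by auto
  moreover from \<open>r dvd n\<close> have "odd r"
    using assms by (meson dvd_trans)
  ultimately show "3 \<le> r"
    using prime_ge_2_nat[of r] by (cases "r = 2") auto
qed

lemma prime_factors_ge_5_of_coprime_6:
  fixes n :: nat
  assumes "odd n" "\<not> 3 dvd n"
  shows "\<forall>r\<in>prime_factors n. 5 \<le> r"
proof
  fix r assume r: "r \<in> prime_factors n"
  moreover have "r dvd n"
    using r by auto
  ultimately have "3 \<le> r" "odd r" "r \<noteq> 3"
    using prime_factors_ge_3_of_odd[OF assms(1)] assms by (meson dvd_trans)+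
  then show "5 \<le> r"
    by presburger
qed

lemma mult_le_mult_of_ratio_le:
  fixes x y u v w z :: nat
  assumes "v * x \<le> u * y" "w * u \<le> z * v" "v > 0"
  shows "w * x \<le> z * y"
proof -
  have "v * (w * x) = w * (v * x)"
    by (simp add: ac_simps)
  also have "\<dots> \<le> w * (u * y)"
    using assms(1) by (rule mult_le_mono2)
  also have "\<dots> = (w * u) * y"
    by (simp add: ac_simps)
  also have "\<dots> \<le> (z * v) * y"
    using assms(2) by (rule mult_le_mono1)
  also have "\<dots> = v * (z * y)"
    by (simp add: ac_simps)
  finally show ?thesis
    using assms(3) by simp
qed

lemma real_le_mult_of_ratio:
  fixes x y u v :: nat
  assumes "v * x \<le> u * y" "v > 0" "real u / real v \<le> c"
  shows "real x \<le> c * real y"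
proof -
  have "real v * real x \<le> real u * real y"
    using assms(1) by (metis of_nat_le_iff of_nat_mult)
  then have "real x \<le> real u / real v * real y"
    using assms(2) by (simp add: field_simps)
  also have "\<dots> \<le> c * real y"
    using assms(3) by (rule mult_right_mono) simp
  finally show ?thesis .
qed

lemma noncentral_sylow_estimate:
  fixes p x F X M B :: nat
  assumes p: "5 \<le> p" and px: "p * x \<le> p * (F * X) + B * M" and X: "7 * X \<le> M"
    and B: "p * B \<le> (p + 1) * F"
  shows "5 * x \<le> 2 * (F * M)"
proof -
  have "7 * p * (p * x) \<le> 7 * p * (p * (F * X) + B * M)"
    using px by (rule mult_le_mono2)
  also have "\<dots> = p * p * F * (7 * X) + 7 * (p * B) * M"
    by (simp add: algebra_simps)
  also have "\<dots> \<le> p * p * F * M + 7 * ((p + 1) * F) * M"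
    using mult_le_mono2[OF X, of "p * p * F"] mult_le_mono1[OF mult_le_mono2[OF B, of 7], of M]
    by (rule add_mono)
  finally have "(7 * (p * p)) * x \<le> (p * p + 7 * (p + 1)) * (F * M)"
    by (simp add: algebra_simps)
  moreover have "5 * (p * p + 7 * (p + 1)) \<le> 2 * (7 * (p * p))"
    using p mult_le_mono1[OF p, of p] by (simp only: distrib_left mult_1_right)
  moreover have "7 * (p * p) > 0"
    using p by simp
  ultimately show ?thesis
    by (rule mult_le_mult_of_ratio_le)
qed

section \<open>Cyclic groups and isomorphisms\<close>

context group
begin

lemma generate_singleton_eq_powers:
  assumes "finite (carrier G)" "x \<in> carrier G"
  shows "generate G {x} = (\<lambda>i. x [^] i) ` {..<ord x}"
proof -
  have "{..<ord x} = {0..ord x - 1}"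
    using ord_ge_1[OF assms] by auto
  then show ?thesis
    using generate_pow_on_finite_carrier[OF assms] ord_elems[OF assms] by auto
qed

lemma pow_ord_generate_singleton:
  assumes "finite (carrier G)" "x \<in> carrier G" "w \<in> generate G {x}"
  shows "w [^] ord x = \<one>"
  using assms generate_singleton_eq_powers[OF assms(1,2)]
  by (auto simp: nat_pow_pow) (metis nat_pow_one nat_pow_pow mult.commute pow_ord_eq_1)

lemma sum_ord_generate_singleton:
  assumes "finite (carrier G)" "x \<in> carrier G"
  shows "(\<Sum>y\<in>generate G {x}. ord y) = psi_C (ord x)"
proof -
  have "{..<ord x} = {0..ord x - 1}"
    using ord_ge_1[OF assms] by auto
  then have "inj_on (\<lambda>i. x [^] i) {..<ord x}"
    using ord_inj[OF assms(2)] by simp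
  then have "(\<Sum>y\<in>generate G {x}. ord y) = (\<Sum>i<ord x. ord (x [^] i))"
    unfolding generate_singleton_eq_powers[OF assms] by (simp add: sum.reindex)
  also have "\<dots> = psi_C (ord x)"
    unfolding psi_C_def using ord_ge_1[OF assms] by (intro sum.cong) (auto simp: ord_pow_gen[OF assms(2)])
  finally show ?thesis .
qed

lemma generate_singleton_eq_carrier_iff:
  assumes "finite (carrier G)" "x \<in> carrier G"
  shows "generate G {x} = carrier G \<longleftrightarrow> ord x = order G"
proof
  show "generate G {x} = carrier G \<Longrightarrow> ord x = order G"
    using generate_pow_card[OF assms(2)] by (simp add: order_def)
  assume "ord x = order G"
  moreover have "generate G {x} \<subseteq> carrier G"
    using generate_incl assms(2) by blast
  ultimately show "generate G {x} = carrier G"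
    using generate_pow_card[OF assms(2)] assms(1) by (intro card_subset_eq) (auto simp: order_def)
qed

lemma subgroup_generated_singleton_eq_iff:
  assumes "x \<in> carrier G"
  shows "subgroup_generated G {x} = G \<longleftrightarrow> generate G {x} = carrier G"
proof -
  have "carrier G \<inter> {x} = {x}"
    using assms by blast
  then have "subgroup_generated G {x} = G\<lparr>carrier := generate G {x}\<rparr>"
    by (simp add: subgroup_generated_def)
  then show ?thesis
    by (metis partial_object.select_convs(1) partial_object.surjective partial_object.update_convs(1))
qed

lemma cyclic_group_iff_ord:
  assumes "finite (carrier G)"
  shows "cyclic_group G \<longleftrightarrow> (\<exists>x\<in>carrier G. ord x = order G)"
  unfolding cyclic_group_def
  using subgroup_generated_singleton_eq_iff generate_singleton_eq_carrier_iff[OF assms] by auto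

lemma psi_cyclic_group:
  assumes "finite (carrier G)" "cyclic_group G"
  shows "psi G = psi_C (order G)"
proof -
  obtain x where x: "x \<in> carrier G" "ord x = order G"
    using assms cyclic_group_iff_ord by blast
  then have "generate G {x} = carrier G"
    using generate_singleton_eq_carrier_iff[OF assms(1)] by blast
  then show ?thesis
    using sum_ord_generate_singleton[OF assms(1) x(1)] x(2) by (simp add: psi_def)
qed

end

lemma ord_integer_mod_group:
  assumes "j < n"
  shows "group.ord (integer_mod_group n) (int j) = n div gcd n j"
proof -
  interpret Z: group "integer_mod_group n"
    by simp
  have "int j \<in> carrier (integer_mod_group n)"
    using assms by (simp add: carrier_integer_mod_group)
  moreover have "int j [^]\<^bsub>integer_mod_group n\<^esub> k = \<one>\<^bsub>integer_mod_group n\<^esub> \<longleftrightarrow> n div gcd n j dvd k"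
    for k :: nat
  proof -
    have "int j [^]\<^bsub>integer_mod_group n\<^esub> k = \<one>\<^bsub>integer_mod_group n\<^esub> \<longleftrightarrow> n dvd k * j"
      by (simp flip: of_nat_mult of_nat_mod add: dvd_eq_mod_eq_0)
    also have "\<dots> \<longleftrightarrow> n div gcd n j dvd k"
      using assms by (simp add: dvd_mult_iff_div_gcd_dvd)
    finally show ?thesis .
  qed
  ultimately show ?thesis
    using Z.ord_unique by blast
qed

lemma psi_integer_mod_group:
  assumes "n > 0"
  shows "psi (integer_mod_group n) = psi_C n"
proof -
  have "carrier (integer_mod_group n) = int ` {..<n}"
    using assms by (auto simp: carrier_integer_mod_group image_iff intro: nonneg_int_cases)
  then show ?thesis
    unfolding psi_def psi_C_def by (simp add: sum.reindex ord_integer_mod_group)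
qed

lemma ord_iso:
  assumes "group G" "group H" "h \<in> iso G H" "x \<in> carrier G"
  shows "group.ord H (h x) = group.ord G x"
proof -
  interpret G: group G by fact
  interpret H: group H by fact
  interpret h: group_hom G H h
    using assms iso_imp_homomorphism by (simp add: group_hom_def group_hom_axioms_def)
  have inj: "inj_on h (carrier G)"
    using assms(3) by (simp add: iso_def bij_betw_def)
  have "h x [^]\<^bsub>H\<^esub> k = \<one>\<^bsub>H\<^esub> \<longleftrightarrow> G.ord x dvd k" for k :: nat
  proof -
    have "h x [^]\<^bsub>H\<^esub> k = h (x [^]\<^bsub>G\<^esub> k)"
      using h.hom_nat_pow assms(4) by simp
    moreover have "h (x [^]\<^bsub>G\<^esub> k) = \<one>\<^bsub>H\<^esub> \<longleftrightarrow> x [^]\<^bsub>G\<^esub> k = \<one>\<^bsub>G\<^esub>"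
      using inj assms(4) h.hom_one by (metis G.nat_pow_closed G.one_closed inj_on_eq_iff)
    ultimately show ?thesis
      using G.pow_eq_id[OF assms(4)] by simp
  qed
  moreover have "h x \<in> carrier H"
    using assms(4) by simp
  ultimately show ?thesis
    using H.ord_unique by blast
qed

lemma psi_iso:
  assumes "group G" "group H" "G \<cong> H"
  shows "psi G = psi H"
proof -
  obtain h where h: "h \<in> iso G H"
    using assms(3) unfolding is_iso_def by blast
  then have "bij_betw h (carrier G) (carrier H)"
    by (simp add: iso_def)
  then have "psi H = (\<Sum>x\<in>carrier G. group.ord H (h x))"
    unfolding psi_def by (simp add: sum.reindex_bij_betw[symmetric])
  also have "\<dots> = psi G"
    unfolding psi_def using ord_iso[OF assms(1,2) h] by simp
  finally show ?thesis
    by simp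
qed

text \<open>Each finite group is isomorphic to one on a subset of \<open>nat\<close>; this lets an induction
  over all finite groups, which cannot quantify over types, be carried out for one fixed type.\<close>
lemma ex_iso_nat_monoid:
  assumes G: "group G" and fin: "finite (carrier G)"
  shows "\<exists>H :: nat monoid. group H \<and> G \<cong> H"
proof -
  interpret G: group G by fact
  define N where "N = card (carrier G)"
  obtain g where g: "bij_betw g (carrier G) {0..<N}"
    using ex_bij_betw_finite_nat[OF fin] unfolding N_def by blast
  define f where "f = the_inv_into (carrier G) g"
  have fg: "f (g x) = x" if "x \<in> carrier G" for x
    using g that unfolding f_def by (simp add: bij_betw_def the_inv_into_f_f)
  have gf: "g (f a) = a" "f a \<in> carrier G" if "a \<in> {0..<N}" for a
    using g that unfolding f_def by (auto simp: bij_betw_def f_the_inv_into_f the_inv_into_into)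
  have g_in: "g x < N" if "x \<in> carrier G" for x
    using g that by (auto simp: bij_betw_def)
  define H where "H = \<lparr>carrier = {0..<N}, monoid.mult = (\<lambda>a b. g (f a \<otimes>\<^bsub>G\<^esub> f b)), one = g \<one>\<^bsub>G\<^esub>\<rparr>"
  have "monoid H"
    unfolding H_def by (rule monoidI) (auto intro!: g_in simp: gf fg G.m_assoc)
  moreover have "g \<in> iso G H"
    using g unfolding iso_def H_def by (auto intro!: homI simp: fg g_in)
  ultimately show ?thesis
    using G.iso_imp_group is_isoI by blast
qed

text \<open>The unconditional bound \<open>psi G \<le> psi_C (order G)\<close> is part of the induction hypothesis because
  the non-central case applies it to a centralizer and a quotient that may be cyclic.\<close>
definition psi_ratio_bounded :: "real \<Rightarrow> ('a, 'b) monoid_scheme \<Rightarrow> bool" where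
  "psi_ratio_bounded c G \<longleftrightarrow> psi G \<le> psi_C (order G) \<and>
     (\<not> cyclic_group G \<longrightarrow> real (psi G) \<le> c * real (psi_C (order G)))"

lemma psi_ratio_bounded_iso:
  assumes "group G" "group H" "G \<cong> H"
  shows "psi_ratio_bounded c G \<longleftrightarrow> psi_ratio_bounded c H"
  using psi_iso[OF assms] iso_same_card[OF assms(3)] isomorphic_group_cyclicity[OF assms(3,1,2)]
  by (simp add: psi_ratio_bounded_def order_def)

lemma psi'_le_of_psi_ratio_bounded:
  assumes "group G" "finite (carrier G)" "\<not> cyclic_group G" "psi_ratio_bounded c G"
  shows "psi' G \<le> c"
proof -
  have "order G > 0"
    using assms(1,2) by (simp add: group.is_monoid monoid.order_gt_0_iff_finite)
  then have "psi' G = real (psi G) / real (psi_C (order G))" "psi_C (order G) > 0"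
    by (simp_all add: psi'_def psi_integer_mod_group psi_C_pos)
  then show ?thesis
    using assms(3,4) by (simp add: psi_ratio_bounded_def pos_divide_le_eq)
qed

section \<open>Subgroups of small index and quotients\<close>

lemma ord_subgroup:
  assumes "group G" "subgroup H G" "x \<in> H"
  shows "group.ord (G\<lparr>carrier := H\<rparr>) x = group.ord G x"
proof -
  interpret G: group G by fact
  interpret K: group "G\<lparr>carrier := H\<rparr>"
    using subgroup.subgroup_is_group[OF assms(2,1)] .
  have "x \<in> carrier G"
    using assms subgroup.subset by blast
  then have "x [^]\<^bsub>G\<lparr>carrier := H\<rparr>\<^esub> k = \<one>\<^bsub>G\<lparr>carrier := H\<rparr>\<^esub> \<longleftrightarrow> G.ord x dvd k" for k :: nat
    using G.pow_eq_id[of x k] G.nat_pow_consistent[of x k H] by simp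
  then show ?thesis
    using K.ord_unique[of x] assms(3) by simp
qed

definition centralizer :: "('a, 'b) monoid_scheme \<Rightarrow> 'a \<Rightarrow> 'a set" where
  "centralizer G y = {g \<in> carrier G. g \<otimes>\<^bsub>G\<^esub> y = y \<otimes>\<^bsub>G\<^esub> g}"

context group
begin

lemma subgroup_nat_pow_closed:
  assumes "subgroup H G" "h \<in> H"
  shows "h [^] (k :: nat) \<in> H"
  using subgroup_int_pow_closed[OF assms, of "int k"] by (simp add: int_pow_int)

lemma card_pow_eq_one_generate_singleton:
  assumes fin: "finite (carrier G)" and x: "x \<in> carrier G" and e: "e dvd ord x"
  shows "card {y \<in> generate G {x}. y [^] e = \<one>} \<le> e"
proof -
  obtain k where k: "ord x = e * k"
    using e ..
  have e0: "e > 0"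
    using k ord_ge_1[OF fin x] by (cases "e = 0") auto
  have "{y \<in> generate G {x}. y [^] e = \<one>} \<subseteq> (\<lambda>l. x [^] (k * l)) ` {..<e}"
  proof
    fix y assume y: "y \<in> {y \<in> generate G {x}. y [^] e = \<one>}"
    then obtain i where i: "i < ord x" "y = x [^] i"
      using generate_singleton_eq_powers[OF fin x] by auto
    have "x [^] (i * e) = \<one>"
      using y i x by (simp add: nat_pow_pow)
    then have "k * e dvd i * e"
      using pow_eq_id[OF x] k by (simp add: mult.commute)
    then obtain l where l: "i = k * l"
      using e0 by auto
    then have "l < e"
      using i(1) k by (simp add: mult.commute)
    then show "y \<in> (\<lambda>l. x [^] (k * l)) ` {..<e}"
      using i(2) l by auto
  qed
  then have "card {y \<in> generate G {x}. y [^] e = \<one>} \<le> card ((\<lambda>l. x [^] (k * l)) ` {..<e})"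
    by (rule card_mono[rotated]) simp
  also have "\<dots> \<le> e"
    using card_image_le[of "{..<e}"] by simp
  finally show ?thesis .
qed

lemma generate_singleton_eq_roots:
  assumes fin: "finite (carrier G)" and x: "x \<in> carrier G" and y: "y \<in> generate G {x}"
    and dvd: "ord y dvd ord x"
  shows "generate G {y} = {w \<in> generate G {x}. w [^] ord y = \<one>}"
proof -
  let ?E = "{w \<in> generate G {x}. w [^] ord y = \<one>}"
  have y_carrier: "y \<in> carrier G"
    using y generate_incl x by blast
  have "generate G {y} \<subseteq> ?E"
    using generate_subgroup_incl[of "{y}" "generate G {x}"] y generate_is_subgroup x
      pow_ord_generate_singleton[OF fin y_carrier] by auto
  moreover have "card ?E \<le> card (generate G {y})"
    using card_pow_eq_one_generate_singleton[OF fin x dvd] generate_pow_card[OF y_carrier] by simp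
  moreover have "finite ?E"
    using fin generate_incl[of "{x}"] x by (auto intro: finite_subset)
  ultimately show ?thesis
    using card_subset_eq card_mono by (metis antisym)
qed

lemma conj_nat_pow:
  assumes g: "g \<in> carrier G" and s: "s \<in> carrier G"
  shows "(g \<otimes> s \<otimes> inv g) [^] (t :: nat) = g \<otimes> s [^] t \<otimes> inv g"
proof (induction t)
  case 0
  then show ?case
    using g by simp
next
  case (Suc t)
  have cancel: "inv g \<otimes> (g \<otimes> w) = w" if "w \<in> carrier G" for w
    using g that by (simp add: m_assoc[symmetric])
  have "(g \<otimes> s \<otimes> inv g) [^] Suc t = (g \<otimes> s [^] t \<otimes> inv g) \<otimes> (g \<otimes> s \<otimes> inv g)"
    using Suc by simp
  also have "\<dots> = g \<otimes> s [^] t \<otimes> (inv g \<otimes> (g \<otimes> (s \<otimes> inv g)))"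
    using g s by (simp add: m_assoc)
  also have "\<dots> = g \<otimes> s [^] Suc t \<otimes> inv g"
    using g s cancel by (simp add: m_assoc)
  finally show ?case .
qed

lemma ord_conj:
  assumes g: "g \<in> carrier G" and s: "s \<in> carrier G"
  shows "ord (g \<otimes> s \<otimes> inv g) = ord s"
proof -
  have "(g \<otimes> s \<otimes> inv g) [^] t = \<one> \<longleftrightarrow> ord s dvd t" for t :: nat
  proof -
    have "g \<otimes> s [^] t \<otimes> inv g = \<one> \<longleftrightarrow> s [^] t = \<one>"
      using g s by (simp add: inv_solve_right')
    then show ?thesis
      using conj_nat_pow[OF g s] pow_eq_id[OF s] by simp
  qed
  then show ?thesis
    using ord_unique[of "g \<otimes> s \<otimes> inv g"] g s by simp
qed

lemma normal_generate_singleton: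
  assumes fin: "finite (carrier G)" and y: "y \<in> carrier G"
    and conj: "\<And>g. g \<in> carrier G \<Longrightarrow> g \<otimes> y \<otimes> inv g \<in> generate G {y}"
  shows "generate G {y} \<lhd> G"
proof -
  have sub: "subgroup (generate G {y}) G"
    using generate_is_subgroup y by simp
  have "g \<otimes> w \<otimes> inv g \<in> generate G {y}" if g: "g \<in> carrier G" and w: "w \<in> generate G {y}" for g w
  proof -
    obtain i :: nat where "w = y [^] i"
      using w generate_singleton_eq_powers[OF fin y] by auto
    then have "g \<otimes> w \<otimes> inv g = (g \<otimes> y \<otimes> inv g) [^] i"
      using conj_nat_pow[OF g y] by simp
    then show ?thesis
      using subgroup_nat_pow_closed[OF sub conj[OF g]] by simp
  qed
  then show ?thesis
    using normal_inv_iff sub by blast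
qed

text \<open>Pigeonhole on the cosets \<open>H #> s [^] i\<close>, \<open>i \<le> [G : H]\<close>, gives \<open>s [^] j \<in> H\<close>
  for some \<open>0 < j < p\<close>, and \<open>j\<close> is invertible modulo \<open>ord s\<close>.\<close>
lemma in_subgroup_of_small_index:
  assumes fin: "finite (carrier G)" and H: "subgroup H G" and s: "s \<in> carrier G"
    and p: "prime p" and ord_s: "ord s = p ^ a" and index: "card (rcosets H) < p"
  shows "s \<in> H"
proof -
  define k where "k = card (rcosets H)"
  have "(\<lambda>i. H #> s [^] i) ` {..k} \<subseteq> rcosets H"
    using s H by (auto intro!: rcosetsI subgroup.subset)
  moreover have "finite (rcosets H)"
    using fin rcosets_part_G[OF H] finite_UnionD by metis
  ultimately have "card ((\<lambda>i. H #> s [^] i) ` {..k}) \<le> k"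
    unfolding k_def by (rule card_mono[rotated])
  then have "card ((\<lambda>i. H #> s [^] i) ` {..k}) < card {..k}"
    by simp
  then obtain i i' where ii': "i < i'" "i' \<le> k" "H #> s [^] i = H #> s [^] i'"
    using pigeonhole[of "\<lambda>i. H #> s [^] i" "{..k}"] unfolding inj_on_def
    by (metis atMost_iff linorder_neqE_nat)
  define j where "j = i' - i"
  have "s [^] i' \<in> H #> s [^] i"
    using ii'(3) rcos_self[of "s [^] i'" H] H s by simp
  then have "s [^] i' \<otimes> inv (s [^] i) \<in> H"
    using subgroup.rcos_module_imp[OF H is_group] s by simp
  moreover have "s [^] i' = s [^] j \<otimes> s [^] i"
    using ii'(1) s by (simp add: j_def nat_pow_mult)
  ultimately have sj: "s [^] j \<in> H"
    using s by (simp add: m_assoc)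
  have "0 < j" "j < p"
    using ii' index by (simp_all add: j_def k_def)
  then have "\<not> p dvd j"
    by (auto dest: dvd_imp_le)
  then have "coprime j (p ^ a)"
    using p prime_imp_coprime[of p j] by (simp add: coprime_power_right_iff coprime_commute)
  then obtain u v where uv: "j * u = p ^ a * v + 1"
    using bezout_nat[of j "p ^ a"] \<open>0 < j\<close> by auto
  have "s = (s [^] (p ^ a)) [^] v \<otimes> s"
    using s ord_s by (metis pow_ord_eq_1 nat_pow_one l_one)
  also have "\<dots> = (s [^] j) [^] u"
    using s uv by (simp add: nat_pow_pow nat_pow_mult[symmetric] mult.commute)
  finally have "s = (s [^] j) [^] u" .
  with subgroup_nat_pow_closed[OF H sj] show ?thesis
    by metis
qed

lemma normal_cyclic_sylow_of_small_index:
  assumes fin: "finite (carrier G)" and p: "prime p" and pa: "p ^ a dvd order G"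
    and x: "x \<in> carrier G" and index: "ord x * k = order G" and k: "k < p"
  shows "\<exists>y\<in>carrier G. ord y = p ^ a \<and> generate G {y} \<lhd> G"
proof -
  let ?H = "generate G {x}"
  have H: "subgroup ?H G"
    using generate_is_subgroup x by simp
  have "k > 0"
    using index fin order_gt_0_iff_finite by (metis gr0I mult_0_right)
  have "card (rcosets ?H) * ord x = ord x * k"
    using lagrange[OF H] generate_pow_card[OF x] index by simp
  then have cosets: "card (rcosets ?H) = k"
    using ord_ge_1[OF fin x] by simp
  have "\<not> p dvd k"
    using \<open>k > 0\<close> k by (auto dest: dvd_imp_le)
  then have "coprime (p ^ a) k"
    using p by (simp add: coprime_power_left_iff prime_imp_coprime)
  then have "p ^ a dvd ord x"
    using pa index by (metis coprime_dvd_mult_left_iff)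
  define y where "y = x [^] (ord x div p ^ a)"
  have y: "y \<in> carrier G" "ord y = p ^ a"
    using x ord_pow[OF x, of "ord x div p ^ a"] \<open>p ^ a dvd ord x\<close> ord_ge_1[OF fin x]
    by (auto simp: y_def dvd_div_eq_0_iff elim!: dvdE)
  have "y \<in> ?H"
    using generate_pow_on_finite_carrier[OF fin x] by (auto simp: y_def)
  have "ord y dvd ord x"
    using y(2) \<open>p ^ a dvd ord x\<close> by simp
  then have E: "generate G {y} = {w \<in> ?H. w [^] (p ^ a) = \<one>}"
    using generate_singleton_eq_roots[OF fin x \<open>y \<in> ?H\<close>] y(2) by simp
  have "g \<otimes> y \<otimes> inv g \<in> generate G {y}" if g: "g \<in> carrier G" for g
  proof -
    have conj: "g \<otimes> y \<otimes> inv g \<in> carrier G" "ord (g \<otimes> y \<otimes> inv g) = p ^ a"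
      using ord_conj[OF g y(1)] y g by simp_all
    then have "g \<otimes> y \<otimes> inv g \<in> ?H"
      using in_subgroup_of_small_index[OF fin H _ p] cosets k by simp
    moreover have "(g \<otimes> y \<otimes> inv g) [^] (p ^ a) = \<one>"
      using conj pow_ord_eq_1 by metis
    ultimately show ?thesis
      using E by simp
  qed
  then show ?thesis
    using normal_generate_singleton[OF fin y(1)] y by blast
qed

lemma sum_over_rcosets:
  assumes "finite (carrier G)" "subgroup H G"
  shows "(\<Sum>z\<in>carrier G. f z) = (\<Sum>Y\<in>rcosets H. \<Sum>z\<in>Y. f z)"
proof -
  have "\<forall>Y\<in>rcosets H. finite Y"
    using assms rcosets_part_G[OF assms(2)] by (metis Union_upper finite_subset)
  moreover have "pairwise disjnt (rcosets H)"
    using rcos_disjoint[OF assms(2)] .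
  ultimately show ?thesis
    using sum.Union_disjoint[of "rcosets H" f] rcosets_part_G[OF assms(2)]
    by (simp add: pairwise_def disjnt_def comp_def)
qed

lemma rcos_eq_of_mem_rcosets:
  assumes "subgroup H G" "Y \<in> rcosets H" "z \<in> Y"
  shows "H #> z = Y" "z \<in> carrier G"
proof -
  obtain g where g: "g \<in> carrier G" "Y = H #> g"
    using assms(2) unfolding RCOSETS_def by blast
  then show "H #> z = Y"
    using repr_independence[of z H g] assms by simp
  show "z \<in> carrier G"
    using g assms r_coset_subset_G subgroup.subset by blast
qed

end

context normal
begin

lemma order_FactGroup:
  "order (G Mod H) * card H = order G"
  by (simp add: FactGroup_def lagrange order_def subgroup_axioms)

lemma nat_pow_in_iff_ord_FactGroup_dvd:
  assumes "z \<in> carrier G"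
  shows "z [^] (u :: nat) \<in> H \<longleftrightarrow> group.ord (G Mod H) (H #> z) dvd u"
proof -
  interpret Q: group "G Mod H"
    by (rule factorgroup_is_group)
  have "H #> z \<in> carrier (G Mod H)"
    using assms by (simp add: FactGroup_def rcosetsI subset)
  then have "group.ord (G Mod H) (H #> z) dvd u \<longleftrightarrow> H #> (z [^] u) = H"
    using Q.pow_eq_id[of "H #> z" u] FactGroup_pow[OF assms, of u] by simp
  also have "\<dots> \<longleftrightarrow> z [^] u \<in> H"
    using coset_join2[of "z [^] u" H] rcos_self[of "z [^] u" H] assms subgroup_axioms by auto
  finally show ?thesis
    by simp
qed

lemma ord_eq_ord_FactGroup_mult:
  assumes fin: "finite (carrier G)" and z: "z \<in> carrier G"
  shows "ord z = group.ord (G Mod H) (H #> z) * ord (z [^] group.ord (G Mod H) (H #> z))"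
proof -
  let ?t = "group.ord (G Mod H) (H #> z)"
  have "?t dvd ord z"
    using nat_pow_in_iff_ord_FactGroup_dvd[OF z, of "ord z"] z by simp
  moreover have "?t \<noteq> 0"
    using calculation ord_ge_1[OF fin z] by auto
  ultimately have "ord (z [^] ?t) = ord z div ?t"
    using ord_pow[OF z] by blast
  then show ?thesis
    using \<open>?t dvd ord z\<close> by simp
qed

lemma sum_ord_FactGroup:
  assumes "finite (carrier G)"
  shows "(\<Sum>z\<in>carrier G. group.ord (G Mod H) (H #> z)) = card H * psi (G Mod H)"
proof -
  have "(\<Sum>z\<in>carrier G. group.ord (G Mod H) (H #> z))
      = (\<Sum>Y\<in>rcosets H. \<Sum>z\<in>Y. group.ord (G Mod H) (H #> z))"
    by (rule sum_over_rcosets[OF assms subgroup_axioms])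
  also have "\<dots> = (\<Sum>Y\<in>rcosets H. card H * group.ord (G Mod H) Y)"
    using rcos_eq_of_mem_rcosets[OF subgroup_axioms] card_rcosets_equal[OF _ subset]
    by (intro sum.cong) simp_all
  also have "\<dots> = card H * psi (G Mod H)"
    by (simp add: psi_def FactGroup_def sum_distrib_left)
  finally show ?thesis .
qed

end

section \<open>Bounds from counting element orders\<close>

context group
begin

lemma subgroup_centralizer:
  assumes y: "y \<in> carrier G"
  shows "subgroup (centralizer G y) G"
proof (rule subgroupI)
  fix a assume "a \<in> centralizer G y"
  then have a: "a \<in> carrier G" "a \<otimes> y = y \<otimes> a"
    by (auto simp: centralizer_def)
  have "inv a \<otimes> y = inv a \<otimes> y \<otimes> (a \<otimes> inv a)"
    using a(1) y by simp
  also have "\<dots> = inv a \<otimes> (y \<otimes> a) \<otimes> inv a"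
    using a(1) y by (simp add: m_assoc)
  also have "\<dots> = inv a \<otimes> (a \<otimes> y) \<otimes> inv a"
    by (simp only: a(2))
  also have "\<dots> = y \<otimes> inv a"
    using a(1) y by (simp add: m_assoc[symmetric])
  finally show "inv a \<in> centralizer G y"
    using a by (simp add: centralizer_def)
next
  fix a b assume "a \<in> centralizer G y" "b \<in> centralizer G y"
  then show "a \<otimes> b \<in> centralizer G y"
    using y by (auto simp: centralizer_def m_assoc) (metis m_assoc)
qed (use y in \<open>auto simp: centralizer_def\<close>)

lemma psi_subgroup:
  assumes "subgroup H G"
  shows "psi (G\<lparr>carrier := H\<rparr>) = (\<Sum>x\<in>H. ord x)"
  unfolding psi_def using ord_subgroup[OF is_group assms] by simp

lemma psi_noncyclic_prime_power_le:
  assumes fin: "finite (carrier G)" and p: "prime p" and order: "order G = p ^ Suc b"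
    and noncyclic: "\<not> cyclic_group G"
  shows "psi G \<le> psi_C (p ^ b) + (p ^ Suc b - p ^ b) * p ^ b"
proof -
  have ord_dvd: "ord z dvd p ^ b" if "z \<in> carrier G" for z
    using dvd_prime_power_Suc_neq[OF p] ord_dvd_group_order[OF that] order noncyclic
      cyclic_group_iff_ord[OF fin] that by metis
  show ?thesis
  proof (cases "\<exists>x\<in>carrier G. ord x = p ^ b")
    case True
    then obtain x where x: "x \<in> carrier G" "ord x = p ^ b"
      by blast
    let ?H = "generate G {x}"
    have H: "?H \<subseteq> carrier G" "card ?H = p ^ b"
      using generate_incl x generate_pow_card[OF x(1)] by auto
    have "psi G = (\<Sum>z\<in>?H. ord z) + (\<Sum>z\<in>carrier G - ?H. ord z)"
      unfolding psi_def using sum.subset_diff[OF H(1) fin] by (simp add: add.commute)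
    also have "(\<Sum>z\<in>?H. ord z) = psi_C (p ^ b)"
      using sum_ord_generate_singleton[OF fin x(1)] x(2) by simp
    also have "(\<Sum>z\<in>carrier G - ?H. ord z) \<le> (\<Sum>z\<in>carrier G - ?H. p ^ b)"
      using ord_dvd prime_gt_0_nat[OF p] by (intro sum_mono dvd_imp_le) simp_all
    also have "\<dots> = (p ^ Suc b - p ^ b) * p ^ b"
      using card_Diff_subset[OF finite_subset[OF H(1) fin] H(1)] H(2) order by (simp add: order_def)
    finally show ?thesis
      by simp
  next
    case False
    then have ord_le: "ord z * p \<le> p ^ b" if "z \<in> carrier G" for z
      using dvd_prime_power_le[OF p ord_dvd[OF that]] that by blast
    have "p * psi G = (\<Sum>z\<in>carrier G. ord z * p)"
      by (simp add: psi_def sum_distrib_left mult.commute)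
    also have "\<dots> \<le> (\<Sum>z\<in>carrier G. p ^ b)"
      using ord_le by (rule sum_mono)
    also have "\<dots> = p * (p ^ b * p ^ b)"
      using order by (simp add: order_def)
    finally have "psi G \<le> p ^ b * p ^ b"
      using prime_gt_0_nat[OF p] by simp
    also have "\<dots> \<le> (p ^ Suc b - p ^ b) * p ^ b"
    proof -
      have "2 * p ^ b \<le> p ^ Suc b"
        using mult_right_mono[OF prime_ge_2_nat[OF p], of "p ^ b"] by (simp add: mult.commute)
      then have "p ^ b \<le> p ^ Suc b - p ^ b"
        by linarith
      then show ?thesis
        by (rule mult_right_mono) simp
    qed
    finally show ?thesis
      by simp
  qed
qed

lemma psi_three_group_le:
  assumes fin: "finite (carrier G)" and order: "order G = 3 ^ a" and noncyclic: "\<not> cyclic_group G"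
  shows "25 * psi G \<le> 11 * psi_C (order G)"
proof -
  have "a \<noteq> 0"
  proof
    assume "a = 0"
    then have "ord \<one> = order G"
      using order by simp
    then show False
      using noncyclic cyclic_group_iff_ord[OF fin] by blast
  qed
  then obtain b where b: "a = Suc b"
    using not0_implies_Suc by blast
  have three: "prime (3 :: nat)"
    by simp
  define X Y where "X = (3::nat) ^ b * 3 ^ b" and "Y = psi_C (3 ^ b)"
  have "psi_C (order G) = Y + 6 * X"
    unfolding order b Y_def X_def psi_C_prime_power_Suc[OF three] by simp
  moreover have "4 * Y = 3 * X + 1"
    using psi_C_prime_power[OF three, of b] by (simp add: X_def Y_def mult_2 power_add)
  moreover have "psi G \<le> Y + 2 * X"
    using psi_noncyclic_prime_power_le[OF fin three _ noncyclic] order b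
    by (simp add: X_def Y_def)
  moreover have "X \<ge> 1"
    by (simp add: X_def)
  ultimately show ?thesis
    by linarith
qed

lemma ord_mult_le_of_no_normal_sylow:
  assumes fin: "finite (carrier G)" and p: "prime p" and pa: "p ^ a dvd order G"
    and no_sylow: "\<not> (\<exists>y\<in>carrier G. ord y = p ^ a \<and> generate G {y} \<lhd> G)"
    and x: "x \<in> carrier G"
  shows "ord x * p \<le> order G"
proof (rule ccontr)
  assume "\<not> ord x * p \<le> order G"
  moreover have index: "ord x * (order G div ord x) = order G"
    using ord_dvd_group_order[OF x] by simp
  ultimately have "order G div ord x < p"
    by (metis mult_less_cancel1 not_le_imp_less)
  then show False
    using normal_cyclic_sylow_of_small_index[OF fin p pa x index] no_sylow by blast
qed

lemma psi_no_normal_sylow_le: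
  assumes fin: "finite (carrier G)" and p: "prime p" "5 \<le> p" and q: "3 \<le> q" "q \<le> p"
    and primes: "\<forall>r\<in>prime_factors (order G). q \<le> r \<and> r \<le> p" and pa: "p ^ a dvd order G"
    and no_sylow: "\<not> (\<exists>y\<in>carrier G. ord y = p ^ a \<and> generate G {y} \<lhd> G)"
  shows "5 * psi G \<le> 2 * psi_C (order G)"
proof -
  define n where "n = order G"
  have "n > 0"
    using fin order_gt_0_iff_finite by (simp add: n_def)
  have "p * psi G = (\<Sum>x\<in>carrier G. ord x * p)"
    by (simp add: psi_def sum_distrib_left mult.commute)
  also have "\<dots> \<le> (\<Sum>x\<in>carrier G. n)"
    using ord_mult_le_of_no_normal_sylow[OF fin p(1) pa no_sylow] by (intro sum_mono) (simp add: n_def)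
  also have "\<dots> = n * n"
    by (simp add: n_def order_def)
  finally have "q * (p * psi G) \<le> q * n\<^sup>2"
    by (simp add: power2_eq_square)
  also have "\<dots> \<le> (p + 1) * psi_C n"
    using psi_C_lower_bound[OF \<open>n > 0\<close>] primes q(2) by (simp add: n_def)
  finally have "(q * p) * psi G \<le> (p + 1) * psi_C n"
    by (simp add: mult.assoc)
  moreover have "5 * (p + 1) \<le> 2 * (q * p)"
    using p(2) mult_le_mono1[OF q(1), of p] by (simp only: distrib_left mult_1_right)
  moreover have "q * p > 0"
    using p(2) q(1) by simp
  ultimately show ?thesis
    unfolding n_def by (rule mult_le_mult_of_ratio_le)
qed

end

section \<open>A normal cyclic Sylow subgroup\<close>

context group
begin

context
  fixes p a m y
  assumes fin: "finite (carrier G)" and p: "prime p" and order: "order G = p ^ a * m"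
    and y: "y \<in> carrier G" and ord_y: "ord y = p ^ a" and normal: "generate G {y} \<lhd> G"
begin

lemma order_FactGroup_sylow: "order (G Mod generate G {y}) = m"
  using normal.order_FactGroup[OF normal] generate_pow_card[OF y] ord_y order prime_gt_0_nat[OF p]
  by (metis mult.commute mult_cancel_left power_not_zero gr_implies_not0)

lemma coprime_ord_FactGroup_sylow:
  assumes "\<not> p dvd m" "Y \<in> rcosets (generate G {y})"
  shows "coprime (group.ord (G Mod generate G {y}) Y) (p ^ a)"
proof -
  interpret Q: group "G Mod generate G {y}"
    by (rule normal.factorgroup_is_group[OF normal])
  have "group.ord (G Mod generate G {y}) Y dvd m"
    using Q.ord_dvd_group_order[of Y] assms(2) order_FactGroup_sylow by (simp add: FactGroup_def)
  moreover have "coprime m (p ^ a)"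
    using assms(1) p prime_imp_coprime[of p m] by (simp add: coprime_power_right_iff coprime_commute)
  ultimately show ?thesis
    by (rule coprime_divisors[OF _ dvd_refl])
qed

text \<open>Two elements of \<open>Y\<close> differ by a central \<open>w \<in> P = generate G {y}\<close>; if their \<open>t\<close>-th powers
  agree, where \<open>t\<close> is the order of \<open>Y\<close> in \<open>G / P\<close>, then \<open>ord w\<close> divides both \<open>t\<close> and \<open>|P|\<close>.\<close>
lemma inj_on_pow_ord_FactGroup:
  assumes pm: "\<not> p dvd m" and central: "\<And>g. g \<in> carrier G \<Longrightarrow> g \<otimes> y = y \<otimes> g"
    and Y: "Y \<in> rcosets (generate G {y})"
  shows "inj_on (\<lambda>z. z [^] group.ord (G Mod generate G {y}) Y) Y"
proof (rule inj_onI)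
  let ?P = "generate G {y}"
  let ?T = "group.ord (G Mod ?P) Y"
  interpret N: normal ?P G
    by (rule normal)
  note coset = rcos_eq_of_mem_rcosets[OF N.subgroup_axioms Y]
  fix z1 z2 assume z1: "z1 \<in> Y" and z2: "z2 \<in> Y" and eq: "z1 [^] ?T = z2 [^] ?T"
  define w where "w = z1 \<otimes> inv z2"
  have z: "z1 \<in> carrier G" "z2 \<in> carrier G"
    using coset(2) z1 z2 by auto
  have "w \<in> ?P"
    using N.rcos_module_imp[OF is_group z(2)] z1 coset(1)[OF z2] by (simp add: w_def)
  then obtain i :: nat where i: "w = y [^] i"
    using generate_singleton_eq_powers[OF fin y] by auto
  have w: "w \<in> carrier G" "z1 = w \<otimes> z2"
    using z by (simp_all add: w_def m_assoc)
  have "w \<otimes> z2 = z2 \<otimes> w"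
    using group_commutes_pow[of y z2 i] central[OF z(2)] z(2) y i by simp
  then have "w [^] ?T \<otimes> z2 [^] ?T = \<one> \<otimes> z2 [^] ?T"
    using eq w z(2) pow_mult_distrib by simp
  then have "w [^] ?T = \<one>"
    using w z(2) by (meson nat_pow_closed one_closed right_cancel)
  then have "ord w dvd ?T" "ord w dvd p ^ a"
    using pow_eq_id[OF w(1)] pow_ord_generate_singleton[OF fin y \<open>w \<in> ?P\<close>] ord_y by simp_all
  then have "w = \<one>"
    using coprime_ord_FactGroup_sylow[OF pm Y] ord_eq_1[OF w(1)]
    by (metis coprime_common_divisor_nat coprime_commute nat_dvd_1_iff_1)
  then show "z1 = z2"
    using w z(2) by simp
qed

lemma bij_betw_pow_ord_FactGroup:
  assumes pm: "\<not> p dvd m" and central: "\<And>g. g \<in> carrier G \<Longrightarrow> g \<otimes> y = y \<otimes> g"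
    and Y: "Y \<in> rcosets (generate G {y})"
  shows "bij_betw (\<lambda>z. z [^] group.ord (G Mod generate G {y}) Y) Y (generate G {y})"
proof -
  let ?P = "generate G {y}"
  interpret N: normal ?P G
    by (rule normal)
  note inj = inj_on_pow_ord_FactGroup[OF assms]
  have "(\<lambda>z. z [^] group.ord (G Mod ?P) Y) ` Y \<subseteq> ?P"
    using rcos_eq_of_mem_rcosets[OF N.subgroup_axioms Y] N.nat_pow_in_iff_ord_FactGroup_dvd by auto
  moreover have "card Y = card ?P"
    using card_rcosets_equal[OF Y N.subset] by simp
  moreover have "finite ?P"
    using fin generate_incl[of "{y}"] y finite_subset by blast
  ultimately show ?thesis
    using card_subset_eq card_image[OF inj] inj by (metis bij_betw_def)
qed

lemma psi_central_sylow:
  assumes "\<not> p dvd m" "\<And>g. g \<in> carrier G \<Longrightarrow> g \<otimes> y = y \<otimes> g"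
  shows "psi G = psi_C (p ^ a) * psi (G Mod generate G {y})"
proof -
  let ?P = "generate G {y}"
  interpret N: normal ?P G
    by (rule normal)
  note coset = rcos_eq_of_mem_rcosets[OF N.subgroup_axioms]
  have "(\<Sum>z\<in>Y. ord z) = group.ord (G Mod ?P) Y * psi_C (p ^ a)" if Y: "Y \<in> rcosets ?P" for Y
  proof -
    let ?T = "group.ord (G Mod ?P) Y"
    have "(\<Sum>z\<in>Y. ord z) = (\<Sum>z\<in>Y. ?T * ord (z [^] ?T))"
    proof (rule sum.cong[OF refl])
      fix z assume z: "z \<in> Y"
      show "ord z = ?T * ord (z [^] ?T)"
        using N.ord_eq_ord_FactGroup_mult[OF fin coset(2)[OF Y z]] coset(1)[OF Y z] by simp
    qed
    also have "\<dots> = ?T * (\<Sum>w\<in>?P. ord w)"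
      using sum.reindex_bij_betw[OF bij_betw_pow_ord_FactGroup[OF assms Y], of ord]
      by (simp flip: sum_distrib_left)
    also have "\<dots> = ?T * psi_C (p ^ a)"
      using sum_ord_generate_singleton[OF fin y] ord_y by simp
    finally show ?thesis .
  qed
  then have "psi G = (\<Sum>Y\<in>rcosets ?P. group.ord (G Mod ?P) Y * psi_C (p ^ a))"
    unfolding psi_def sum_over_rcosets[OF fin N.subgroup_axioms] by (rule sum.cong[OF refl])
  then show ?thesis
    by (simp add: psi_def FactGroup_def sum_distrib_left mult.commute)
qed

lemma cyclic_of_central_sylow:
  assumes "\<not> p dvd m" "\<And>g. g \<in> carrier G \<Longrightarrow> g \<otimes> y = y \<otimes> g"
    and cyclic: "cyclic_group (G Mod generate G {y})"
  shows "cyclic_group G"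
proof -
  let ?P = "generate G {y}"
  interpret N: normal ?P G
    by (rule normal)
  interpret Q: group "G Mod ?P"
    by (rule N.factorgroup_is_group)
  have "finite (carrier (G Mod ?P))"
    using order_FactGroup_sylow fin order order_gt_0_iff_finite Q.order_gt_0_iff_finite
    by (metis gr0I mult_0_right)
  then obtain Y where Y: "Y \<in> rcosets ?P" "group.ord (G Mod ?P) Y = m"
    using Q.cyclic_group_iff_ord cyclic order_FactGroup_sylow by (auto simp: FactGroup_def)
  moreover have "y \<in> ?P"
    by (simp add: generate.incl)
  ultimately obtain z where z: "z \<in> Y" "z [^] m = y"
    using bij_betw_pow_ord_FactGroup[OF assms(1,2) Y(1)] by (metis bij_betw_imp_surj_on imageE)
  have "z \<in> carrier G" "?P #> z = Y"
    using rcos_eq_of_mem_rcosets[OF N.subgroup_axioms Y(1) z(1)] by auto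
  moreover have "ord z = m * ord y"
    using N.ord_eq_ord_FactGroup_mult[OF fin, of z] calculation Y(2) z(2) by simp
  ultimately show ?thesis
    using cyclic_group_iff_ord[OF fin] ord_y order by (metis mult.commute)
qed

text \<open>With \<open>t\<close> the order of \<open>z\<close> modulo \<open>P\<close>, \<open>z [^] t \<in> P\<close> cannot generate \<open>P\<close>, as \<open>z\<close> would then
  commute with \<open>y\<close>.\<close>
lemma ord_le_outside_centralizer:
  assumes z: "z \<in> carrier G" "z \<notin> centralizer G y"
  shows "ord z * p \<le> p ^ a * group.ord (G Mod generate G {y}) (generate G {y} #> z)"
proof -
  let ?P = "generate G {y}"
  let ?t = "group.ord (G Mod ?P) (?P #> z)"
  let ?w = "z [^] ?t"
  interpret N: normal ?P G
    by (rule normal)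
  have w: "?w \<in> ?P" "?w \<in> carrier G"
    using N.nat_pow_in_iff_ord_FactGroup_dvd z by auto
  have "ord ?w \<noteq> p ^ a"
  proof
    assume "ord ?w = p ^ a"
    moreover have "generate G {?w} \<subseteq> ?P"
      using generate_subgroup_incl[of "{?w}" ?P] w N.subgroup_axioms by simp
    moreover have "finite ?P"
      using fin generate_incl[of "{y}"] y finite_subset by blast
    ultimately have "generate G {?w} = ?P"
      using card_subset_eq generate_pow_card[OF w(2)] generate_pow_card[OF y] ord_y by metis
    then obtain i :: nat where "y = ?w [^] i"
      using generate_singleton_eq_powers[OF fin w(2)] generate.incl[of y "{y}" G] by auto
    then obtain j :: nat where j: "y = z [^] j"
      using z by (auto simp: nat_pow_pow)
    then have "z \<otimes> y = y \<otimes> z"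
      using z nat_pow_comm[of z 1 j] by simp
    then show False
      using z by (simp add: centralizer_def)
  qed
  then have "ord ?w * p \<le> p ^ a"
    using dvd_prime_power_le[OF p] pow_eq_id[OF w(2)] pow_ord_generate_singleton[OF fin y w(1)] ord_y
    by simp
  then show ?thesis
    using N.ord_eq_ord_FactGroup_mult[OF fin z(1)] by (simp add: algebra_simps)
qed

lemma psi_noncentral_sylow_le:
  "p * psi G \<le> p * psi (G\<lparr>carrier := centralizer G y\<rparr>) + p ^ a * p ^ a * psi (G Mod generate G {y})"
proof -
  let ?P = "generate G {y}" and ?C = "centralizer G y"
  have C: "?C \<subseteq> carrier G"
    by (auto simp: centralizer_def)
  have "psi G = (\<Sum>z\<in>?C. ord z) + (\<Sum>z\<in>carrier G - ?C. ord z)"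
    unfolding psi_def using sum.subset_diff[OF C fin] by (simp add: add.commute)
  then have "p * psi G = p * (\<Sum>z\<in>?C. ord z) + (\<Sum>z\<in>carrier G - ?C. ord z * p)"
    by (simp add: algebra_simps sum_distrib_left sum_distrib_right)
  also have "(\<Sum>z\<in>carrier G - ?C. ord z * p) \<le> (\<Sum>z\<in>carrier G - ?C. p ^ a * group.ord (G Mod ?P) (?P #> z))"
    using ord_le_outside_centralizer by (intro sum_mono) simp
  also have "\<dots> \<le> (\<Sum>z\<in>carrier G. p ^ a * group.ord (G Mod ?P) (?P #> z))"
    using fin by (intro sum_mono2) auto
  also have "\<dots> = p ^ a * (p ^ a * psi (G Mod ?P))"
    using normal.sum_ord_FactGroup[OF normal fin] generate_pow_card[OF y] ord_y
    by (simp flip: sum_distrib_left)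
  also have "(\<Sum>z\<in>?C. ord z) = psi (G\<lparr>carrier := ?C\<rparr>)"
    using psi_subgroup[OF subgroup_centralizer[OF y]] by simp
  finally show ?thesis
    by (simp add: algebra_simps)
qed

lemma card_centralizer_sylow:
  assumes "centralizer G y \<noteq> carrier G"
  obtains c k where "card (centralizer G y) = p ^ a * c" "m = c * k" "k \<noteq> 1"
proof -
  let ?C = "centralizer G y" and ?P = "generate G {y}"
  have C: "subgroup ?C G"
    by (rule subgroup_centralizer[OF y])
  have "?P \<subseteq> ?C"
  proof
    fix w assume "w \<in> ?P"
    then obtain i :: nat where "w = y [^] i"
      using generate_singleton_eq_powers[OF fin y] by auto
    then show "w \<in> ?C"
      using y nat_pow_comm[of y i 1] by (simp add: centralizer_def)
  qed
  then have "subgroup ?P (G\<lparr>carrier := ?C\<rparr>)"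
    using subgroup_incl[OF normal_imp_subgroup[OF normal] C] by blast
  then have "card (rcosets\<^bsub>G\<lparr>carrier := ?C\<rparr>\<^esub> ?P) * p ^ a = card ?C"
    using group.lagrange[OF subgroup.subgroup_is_group[OF C is_group]] generate_pow_card[OF y] ord_y
    by (simp add: order_def)
  then obtain c where c: "card ?C = p ^ a * c"
    by (metis mult.commute)
  define k where "k = card (rcosets ?C)"
  have "k * card ?C = order G"
    using lagrange[OF C] by (simp add: k_def)
  then have "m = c * k"
    using c order prime_gt_0_nat[OF p] by (simp add: algebra_simps)
  moreover have "k \<noteq> 1"
  proof
    assume "k = 1"
    then have "card ?C = card (carrier G)"
      using \<open>k * card ?C = order G\<close> by (simp add: order_def)
    then have "?C = carrier G"
      using card_subset_eq[OF fin subgroup.subset[OF C]] by simp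
    with assms show False ..
  qed
  ultimately show ?thesis
    using that c by blast
qed

lemma psi_noncentral_sylow_bound:
  assumes p5: "5 \<le> p" and pm: "\<not> p dvd m" and m_primes: "\<forall>r\<in>prime_factors m. 3 \<le> r"
    and noncentral: "centralizer G y \<noteq> carrier G"
    and centralizer_le: "psi (G\<lparr>carrier := centralizer G y\<rparr>) \<le> psi_C (card (centralizer G y))"
    and quotient_le: "psi (G Mod generate G {y}) \<le> psi_C m"
  shows "5 * psi G \<le> 2 * psi_C (order G)"
proof -
  obtain c k where c: "card (centralizer G y) = p ^ a * c" and m: "m = c * k" and "k \<noteq> 1"
    using card_centralizer_sylow[OF noncentral] .
  have "m > 0"
    using order fin order_gt_0_iff_finite by (metis gr0I mult_0_right)
  then have "c > 0"
    using m by simp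
  obtain r where r: "prime r" "r dvd k"
    using \<open>k \<noteq> 1\<close> prime_factor_nat by blast
  then have "c * r dvd m"
    using m by simp
  then have "3 \<le> r"
    using m_primes r(1) \<open>m > 0\<close> by (auto simp: in_prime_factors_iff dest: dvd_mult_right)
  then have "7 \<le> r * r - r + 1"
    using mult_le_mono1[OF \<open>3 \<le> r\<close>, of r] by linarith
  then have "7 * psi_C c \<le> (r * r - r + 1) * psi_C c"
    by (rule mult_le_mono1)
  also have "\<dots> \<le> psi_C (c * r)"
    using psi_C_mult_prime_ge[OF r(1) \<open>c > 0\<close>] .
  also have "\<dots> \<le> psi_C m"
    using psi_C_mono_dvd[OF \<open>c * r dvd m\<close> \<open>m > 0\<close>] .
  finally have X: "7 * psi_C c \<le> psi_C m" .
  have coprime: "coprime (p ^ a) c" "coprime (p ^ a) m"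
    using pm p m prime_imp_coprime[of p m] by (simp_all add: coprime_power_left_iff)
  have "p * psi G \<le> p * psi (G\<lparr>carrier := centralizer G y\<rparr>) + p ^ a * p ^ a * psi (G Mod generate G {y})"
    by (rule psi_noncentral_sylow_le)
  also have "\<dots> \<le> p * (psi_C (p ^ a) * psi_C c) + p ^ a * p ^ a * psi_C m"
    using centralizer_le quotient_le c psi_C_mult[OF coprime(1)] by (intro add_mono mult_le_mono2) simp_all
  finally have "p * psi G \<le> p * (psi_C (p ^ a) * psi_C c) + p ^ a * p ^ a * psi_C m" .
  moreover have "p * (p ^ a * p ^ a) \<le> (p + 1) * psi_C (p ^ a)"
    using psi_C_prime_power[OF p, of a] by (simp add: mult_2 power_add)
  ultimately have "5 * psi G \<le> 2 * (psi_C (p ^ a) * psi_C m)"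
    using noncentral_sylow_estimate[OF p5] X by blast
  then show ?thesis
    using psi_C_mult[OF coprime(2)] order by simp
qed

lemma psi_normal_sylow_le:
  assumes p5: "5 \<le> p" and pm: "\<not> p dvd m" and m_primes: "\<forall>r\<in>prime_factors m. 3 \<le> r"
    and c: "2 / 5 \<le> c" and noncyclic: "\<not> cyclic_group G"
    and quotient: "psi_ratio_bounded c (G Mod generate G {y})"
    and subgroups: "\<And>H. subgroup H G \<Longrightarrow> H \<noteq> carrier G \<Longrightarrow> psi (G\<lparr>carrier := H\<rparr>) \<le> psi_C (card H)"
  shows "real (psi G) \<le> c * real (psi_C (order G))"
proof (cases "centralizer G y = carrier G")
  case True
  then have central: "\<And>g. g \<in> carrier G \<Longrightarrow> g \<otimes> y = y \<otimes> g"
    by (auto simp: centralizer_def)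
  have "\<not> cyclic_group (G Mod generate G {y})"
    using cyclic_of_central_sylow[OF pm central] noncyclic by blast
  then have "real (psi (G Mod generate G {y})) \<le> c * real (psi_C m)"
    using quotient order_FactGroup_sylow
    by (simp add: psi_ratio_bounded_def)
  then have "real (psi_C (p ^ a)) * real (psi (G Mod generate G {y}))
      \<le> real (psi_C (p ^ a)) * (c * real (psi_C m))"
    by (rule mult_left_mono) simp
  moreover have "coprime (p ^ a) m"
    using pm p prime_imp_coprime[of p m] by (simp add: coprime_power_left_iff)
  ultimately show ?thesis
    using psi_central_sylow[OF pm central] psi_C_mult[of "p ^ a" m] order
    by (simp add: algebra_simps)
next
  case False
  have "5 * psi G \<le> 2 * psi_C (order G)"
  proof (rule psi_noncentral_sylow_bound[OF p5 pm m_primes False])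
    show "psi (G\<lparr>carrier := centralizer G y\<rparr>) \<le> psi_C (card (centralizer G y))"
      using subgroups[OF subgroup_centralizer[OF y] False] .
    show "psi (G Mod generate G {y}) \<le> psi_C m"
      using quotient order_FactGroup_sylow
      by (simp add: psi_ratio_bounded_def)
  qed
  with c show ?thesis
    by (intro real_le_mult_of_ratio[of 5 _ 2]) simp_all
qed

end

end

section \<open>The induction on the group order\<close>

lemma psi_ratio_bounded_transfer:
  assumes IH: "\<And>H :: nat monoid. group H \<Longrightarrow> finite (carrier H) \<Longrightarrow> order H < N \<Longrightarrow>
      \<forall>r\<in>prime_factors (order H). q \<le> r \<Longrightarrow> psi_ratio_bounded c H"
    and K: "group K" "finite (carrier K)" "order K < N" "\<forall>r\<in>prime_factors (order K). q \<le> r"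
  shows "psi_ratio_bounded c K"
proof -
  obtain H :: "nat monoid" where H: "group H" "K \<cong> H"
    using ex_iso_nat_monoid[OF K(1,2)] by blast
  then have "order H = order K"
    using iso_same_card[OF H(2)] by (simp add: order_def)
  moreover have "finite (carrier H)"
    using calculation monoid.order_gt_0_iff_finite[OF group.is_monoid[OF K(1)]] K(2)
    by (metis card_ge_0_finite order_def)
  ultimately show ?thesis
    using IH[OF H(1)] K(3,4) psi_ratio_bounded_iso[OF K(1) H] by simp
qed

context group
begin

context
  fixes q c
  assumes fin: "finite (carrier G)" and primes: "\<forall>r\<in>prime_factors (order G). q \<le> r"
    and IH: "\<And>H :: nat monoid. group H \<Longrightarrow> finite (carrier H) \<Longrightarrow> order H < order G \<Longrightarrow>
      \<forall>r\<in>prime_factors (order H). q \<le> r \<Longrightarrow> psi_ratio_bounded c H"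
begin

lemma psi_ratio_bounded_proper_subgroup:
  assumes H: "subgroup H G" "H \<noteq> carrier G"
  shows "psi_ratio_bounded c (G\<lparr>carrier := H\<rparr>)"
proof (rule psi_ratio_bounded_transfer[OF IH])
  show "group (G\<lparr>carrier := H\<rparr>)"
    using subgroup.subgroup_is_group[OF H(1) is_group] .
  show "finite (carrier (G\<lparr>carrier := H\<rparr>))"
    using fin subgroup.subset[OF H(1)] finite_subset by auto
  show "order (G\<lparr>carrier := H\<rparr>) < order G"
    using fin H subgroup.subset[OF H(1)] psubset_card_mono by (auto simp: order_def)
  have "card H dvd order G"
    using lagrange[OF H(1)] by (metis dvd_triv_right)
  then show "\<forall>r\<in>prime_factors (order (G\<lparr>carrier := H\<rparr>)). q \<le> r"
    using prime_factors_ge_dvd[OF _ primes] fin order_gt_0_iff_finite by (simp add: order_def)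
qed

lemma psi_ratio_bounded_proper_quotient:
  assumes N: "N \<lhd> G" "card N > 1"
  shows "psi_ratio_bounded c (G Mod N)"
proof (rule psi_ratio_bounded_transfer[OF IH])
  interpret N: normal N G
    by (rule N(1))
  have order: "order (G Mod N) * card N = order G"
    by (rule N.order_FactGroup)
  moreover have "order G > 0"
    using fin order_gt_0_iff_finite by simp
  ultimately have "order (G Mod N) > 0"
    by (metis gr0I mult_0)
  then show "finite (carrier (G Mod N))"
    by (simp add: order_def card_gt_0_iff)
  show "order (G Mod N) < order G"
    using \<open>order (G Mod N) > 0\<close> N(2) by (simp flip: order)
  show "group (G Mod N)"
    by (rule N.factorgroup_is_group)
  show "\<forall>r\<in>prime_factors (order (G Mod N)). q \<le> r"
    using prime_factors_ge_dvd[OF \<open>order G > 0\<close> primes] order by (metis dvd_triv_left)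
qed

lemma psi_large_prime_bound:
  assumes c: "2 / 5 \<le> c" and noncyclic: "\<not> cyclic_group G" and q: "3 \<le> q" "q \<le> p"
    and p: "prime p" "5 \<le> p" "\<forall>r\<in>prime_factors (order G). r \<le> p"
    and order: "order G = p ^ a * m" "\<not> p dvd m" "a > 0" and m_primes: "\<forall>r\<in>prime_factors m. 3 \<le> r"
  shows "real (psi G) \<le> c * real (psi_C (order G))"
proof (cases "\<exists>y\<in>carrier G. ord y = p ^ a \<and> generate G {y} \<lhd> G")
  case True
  then obtain y where y: "y \<in> carrier G" "ord y = p ^ a" "generate G {y} \<lhd> G"
    by blast
  show ?thesis
  proof (rule psi_normal_sylow_le[OF fin p(1) order(1) y p(2) order(2) m_primes c noncyclic])
    have "p ^ a > 1"
      using order(3) prime_gt_1_nat[OF p(1)] by (metis one_less_power)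
    then show "psi_ratio_bounded c (G Mod generate G {y})"
      using psi_ratio_bounded_proper_quotient[OF y(3)] generate_pow_card[OF y(1)] y(2) by simp
    show "psi (G\<lparr>carrier := H\<rparr>) \<le> psi_C (card H)" if "subgroup H G" "H \<noteq> carrier G" for H
      using psi_ratio_bounded_proper_subgroup[OF that] by (simp add: psi_ratio_bounded_def order_def)
  qed
next
  case False
  have "5 * psi G \<le> 2 * psi_C (order G)"
    using psi_no_normal_sylow_le[OF fin p(1,2) q _ _ False] primes p(3) order(1) by simp
  with c show ?thesis
    by (intro real_le_mult_of_ratio[of 5 _ 2]) simp_all
qed

lemma psi_noncyclic_bound:
  assumes q: "3 \<le> q" and c: "2 / 5 \<le> c" "q < 5 \<Longrightarrow> 11 / 25 \<le> c"
    and noncyclic: "\<not> cyclic_group G" and p: "prime p" "\<forall>r\<in>prime_factors (order G). r \<le> p"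
    and order: "order G = p ^ a * m" "\<not> p dvd m" "a > 0"
  shows "real (psi G) \<le> c * real (psi_C (order G))"
proof -
  have "q \<le> p"
    using primes p(1) order(1,3) fin order_gt_0_iff_finite by (auto simp: in_prime_factors_iff)
  have m_primes: "q \<le> r" "r < p" if r: "r \<in> prime_factors m" for r
  proof -
    have "r \<in> prime_factors (order G)" "r \<noteq> p"
      using r order fin order_gt_0_iff_finite by (auto simp: in_prime_factors_iff)
    then show "q \<le> r" "r < p"
      using primes p(2) by auto
  qed
  show ?thesis
  proof (cases "p \<le> 3")
    case True
    then have "p = 3" "q \<le> 3"
      using \<open>q \<le> p\<close> q by auto
    then have "prime_factors m = {}"
      using m_primes q by fastforce
    then have "m = 1"
      using order fin order_gt_0_iff_finite by (auto simp: prime_factorization_empty_iff)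
    then have "25 * psi G \<le> 11 * psi_C (order G)"
      using psi_three_group_le[OF fin _ noncyclic] order(1) \<open>p = 3\<close> by simp
    with c(2) \<open>q \<le> 3\<close> show ?thesis
      by (intro real_le_mult_of_ratio[of 25 _ 11]) simp_all
  next
    case False
    then have "5 \<le> p"
      using prime_odd_nat[OF p(1)] by (cases "p = 4") auto
    moreover have "\<forall>r\<in>prime_factors m. 3 \<le> r"
      using m_primes(1) q by fastforce
    ultimately show ?thesis
      using psi_large_prime_bound[OF c(1) noncyclic q \<open>q \<le> p\<close> p(1) _ p(2) order] by blast
  qed
qed

lemma psi_ratio_bounded_step:
  assumes "3 \<le> q" "2 / 5 \<le> c" "c \<le> 1" "q < 5 \<Longrightarrow> 11 / 25 \<le> c"
  shows "psi_ratio_bounded c G"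
proof (cases "cyclic_group G")
  case True
  then show ?thesis
    using psi_cyclic_group[OF fin] by (simp add: psi_ratio_bounded_def)
next
  case False
  then have "order G \<noteq> 1"
    using cyclic_group_iff_ord[OF fin] ord_id one_closed by metis
  then obtain p a m where "prime p" "\<forall>r\<in>prime_factors (order G). r \<le> p"
    "order G = p ^ a * m" "\<not> p dvd m" "a > 0"
    using obtain_largest_prime_factor fin order_gt_0_iff_finite by (metis less_one nat_neq_iff)
  then have "real (psi G) \<le> c * real (psi_C (order G))"
    using psi_noncyclic_bound assms(1,2,4) False by blast
  moreover have "c * real (psi_C (order G)) \<le> real (psi_C (order G))"
    using assms(2,3) by (intro mult_left_le_one_le) simp_all
  ultimately show ?thesis
    by (simp add: psi_ratio_bounded_def)
qed

end

end

theorem psi_ratio_bounded: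
  assumes "group G" "finite (carrier G)" "\<forall>r\<in>prime_factors (order G). q \<le> r"
    and "3 \<le> q" "2 / 5 \<le> c" "c \<le> 1" "q < 5 \<Longrightarrow> 11 / 25 \<le> c"
  shows "psi_ratio_bounded c G"
proof -
  have nat_groups: "psi_ratio_bounded c H"
    if "group H" "finite (carrier H)" "\<forall>r\<in>prime_factors (order H). q \<le> r" for H :: "nat monoid"
    using that
  proof (induction "order H" arbitrary: H rule: less_induct)
    case less
    then show ?case
      using group.psi_ratio_bounded_step[OF less.prems _ assms(4-7)] by blast
  qed
  show ?thesis
    using group.psi_ratio_bounded_step[OF assms(1-3) nat_groups assms(4-7)] by blast
qed

theorem lemma3p1:
  fixes G :: "('a, 'b) monoid_scheme"
  assumes "group G" and "finite (carrier G)" and "\<not> cyclic_group G"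
  shows "(psi' G \<ge> 19 / 43 \<longrightarrow> 2 dvd order G)
       \<and> (psi' G > 31 / 77 \<longrightarrow> 2 dvd order G \<or> 3 dvd order G)"
proof -
  have "psi' G \<le> 11 / 25" if "odd (order G)"
    by (intro psi'_le_of_psi_ratio_bounded[OF assms]
        psi_ratio_bounded[OF assms(1,2) prime_factors_ge_3_of_odd[OF that]]) simp_all
  moreover have "psi' G \<le> 2 / 5" if "odd (order G)" "\<not> 3 dvd order G"
    by (intro psi'_le_of_psi_ratio_bounded[OF assms]
        psi_ratio_bounded[OF assms(1,2) prime_factors_ge_5_of_coprime_6[OF that]]) simp_all
  ultimately show ?thesis
    by force
qed

end
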